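(* Let $X$, $H$, $v=(r,H,s)$ (primitive), $Y$, $a,b,c,d$, $\widetilde H=H/d$ be as in the context, let $\gamma=\gamma(\widetilde H)$ in $N(X)$, and assume $\gcd(c,d\gamma)=1$. Then: (1) $N(X)=[\widetilde H,\ K(\widetilde H),\ \gamma\widetilde H^*+u^*(\widetilde H)]$, where $\widetilde H^*=\widetilde H/\widetilde H^2=d^2\widetilde H/(2abc^2)$, and $u^*(\widetilde H)+K(\widetilde H)$ has order $2abc^2/(d^2\gamma)$ in $K(\widetilde H)^*/K(\widetilde H)$. (2) Let $h\in N(Y)$ be the class of $(-a,0,b)$ mod $\mathbb Zv$. Then $h^2=2ab$, $h$ is divisible by $d$ in $N(Y)$, $\widetilde h=h/d$ is primitive in $N(Y)$, $\gamma(\widetilde h)=\gamma$ (computed in $N(Y)$), and $N(Y)=[\widetilde h,\ K(h),\ \gamma\widetilde h^*+u^*(\widetilde h)]$, where $K(h)=h^\perp\subset N(Y)$, $\widetilde h^*=d^2\widetilde h/(2ab)$, and $u^*(\widetilde h)+K(h)$ has order $2ab/(d^2\gamma)$ in $K(h)^*/K(h)$. (3) Under the map $K(\widetilde H)\to N(Y)$, $k\mapsto (0,k,0)\bmod\mathbb Zv$, $K(\widetilde H)$ is identified with a sublattice of $K(h)$ (so that $K(h)\otimes\mathbb Q=K(\widetilde H)\otimes\mathbb Q$), and $$K(h)=\Big[K(\widetilde H),\ \tfrac{2ab}{d^2\gamma}\,c\,u^*(\widetilde H)\Big],\qquad u^*(\widetilde h)+K(h)=m(a,b)\,c\,u^*(\widetilde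 H)+K(h),$$ where $m(a,b)$ is an integer with $m(a,b)\equiv-1\pmod{2a}$, $m(a,b)\equiv1\pmod{2b}$ (only its class mod $2ab/(d^2\gamma)$ matters).
   Context: $X$ is a smooth complex projective K3 surface with Picard lattice $N(X)\subset H^2(X,\mathbb Z)$. $H\in N(X)$ is a polarization with $H^2=2rs$, $r,s\in\mathbb N$; $d\in\mathbb N$ with $\widetilde H=H/d$ primitive. On $H^*(X,\mathbb Z)\cong\mathbb Z\oplus H^2(X,\mathbb Z)\oplus\mathbb Z$ use the Mukai pairing $((u_0,u_1,u_2),(v_0,v_1,v_2))=-(u_0v_2+u_2v_0)+u_1\cdot v_1$; $v=(r,H,s)$ is isotropic and primitive. $Y$ is the moduli space of $H$-semistable coherent sheaves with Mukai vector $v$ (minimal resolution if singular), a K3 surface; by Mukai, $H^2(Y,\mathbb Z)\cong v^\perp/\mathbb Zv$ as Hodge structures, and $N(Y)=v^\perp_{\mathbb Z\oplus N(X)\oplus\mathbb Z}/\mathbb Zv$. $c=\gcd(r,s)$, $a=r/c$, $b=s/c$. For an even lattice $S$ and primitive $P\in S$ with $P^2=2m\neq0$: $\gamma(P)>0$ with $P\cdot S=\gamma(P)\mathbb Z$; $K(P)=P^\perp\subset S$; $P^*=P/(2m)$; $u^*(P)\in K(P)^*$ is an element with $\gamma(P)P^*+u^*(P)\in S$ (canonical mod $K(P)$). $[x_1,\dots,x_k]$ denotes the subgroup generated by the listed elements/sublattices inside the ambient rational space. *)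

theory Defs
  imports "HOL-Analysis.Analysis" "HOL-Number_Theory.Cong"
begin

definition qspan :: "'a::real_vector set \<Rightarrow> 'a set" where
  "qspan A = {x. \<exists>F c. finite F \<and> F \<subseteq> A \<and> (\<forall>a. c a \<in> \<rat>) \<and> x = (\<Sum>a\<in>F. c a *\<^sub>R a)}"

definition zspan :: "'a::real_vector set \<Rightarrow> 'a set" where
  "zspan A = {x. \<exists>F (c::'a \<Rightarrow> int). finite F \<and> F \<subseteq> A \<and> x = (\<Sum>a\<in>F. of_int (c a) *\<^sub>R a)}"

definition lat_primitive :: "'a::real_vector set \<Rightarrow> 'a \<Rightarrow> bool" where
  "lat_primitive S P \<longleftrightarrow> P \<in> S \<and> (\<forall>n::nat. n > 1 \<longrightarrow> (1 / real n) *\<^sub>R P \<notin> S)"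

definition lat_gamma :: "('a \<Rightarrow> 'a \<Rightarrow> real) \<Rightarrow> 'a set \<Rightarrow> 'a \<Rightarrow> int" where
  "lat_gamma B S P = (THE g::int. g > 0 \<and> {B P x | x. x \<in> S} = {of_int (g * k) | k. True})"

definition orth :: "('a \<Rightarrow> 'a \<Rightarrow> real) \<Rightarrow> 'a set \<Rightarrow> 'a \<Rightarrow> 'a set" where
  "orth B S P = {x \<in> S. B P x = 0}"

definition pstar :: "('a::real_vector \<Rightarrow> 'a \<Rightarrow> real) \<Rightarrow> 'a \<Rightarrow> 'a" where
  "pstar B P = (1 / B P P) *\<^sub>R P"

definition dual :: "('a::real_vector \<Rightarrow> 'a \<Rightarrow> real) \<Rightarrow> 'a set \<Rightarrow> 'a set" where
  "dual B K = {y \<in> qspan K. \<forall>k\<in>K. B y k \<in> \<int>}"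

text \<open>The set of admissible choices of u^*(P) (canonical mod K(P))\<close>
definition ustar :: "('a::real_vector \<Rightarrow> 'a \<Rightarrow> real) \<Rightarrow> 'a set \<Rightarrow> 'a \<Rightarrow> 'a set" where
  "ustar B S P = {u \<in> dual B (orth B S P).
      of_int (lat_gamma B S P) *\<^sub>R pstar B P + u \<in> S}"

definition coset_order :: "'a::real_vector set \<Rightarrow> 'a \<Rightarrow> nat" where
  "coset_order K u = (LEAST n::nat. n > 0 \<and> real n *\<^sub>R u \<in> K)"

definition NXlat :: "(real^'n) set" where
  "NXlat = {x. \<forall>i. x $ i \<in> \<int>}"

definition bf :: "real^'n^'n \<Rightarrow> real^'n \<Rightarrow> real^'n \<Rightarrow> real" where
  "bf G x y = x \<bullet> (G *v y)"

definition mukai :: "real^'n^'n \<Rightarrow> real \<times> (real^'n) \<times> real \<Rightarrow> real \<times> (real^'n) \<times> real \<Rightarrow> real" where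
  "mukai G u w = - (fst u * snd (snd w) + snd (snd u) * fst w) + bf G (fst (snd u)) (fst (snd w))"

definition mukai_lat :: "(real \<times> (real^'n) \<times> real) set" where
  "mukai_lat = {w. fst w \<in> \<int> \<and> fst (snd w) \<in> NXlat \<and> snd (snd w) \<in> \<int>}"

text \<open>N(Y) = (v-perp in Z+N(X)+Z) / Zv, represented by its preimage saturated by the
  line R v (the radical of the Mukai form on v-perp).\<close>
definition NYlat :: "real^'n^'n \<Rightarrow> real \<times> (real^'n) \<times> real \<Rightarrow> (real \<times> (real^'n) \<times> real) set" where
  "NYlat G v = {w + t *\<^sub>R v | w t. w \<in> mukai_lat \<and> mukai G v w = 0}"

end

theory Submission
  imports Defs
begin

text \<open>
  Let P be a primitive vector of positive square in an integral lattice S and let \<gamma> generate P.S.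
  Whenever \<gamma>P* + u lies in S it pairs to \<gamma> with P, so every x in S with P.x = k\<gamma> is
  k(\<gamma>P* + u) plus an element of K(P). Moreover N u = N(\<gamma>P* + u) - P lies in K(P) for
  N = P^2/\<gamma>, while for a smaller multiple a proper fraction of P would lie in S.

  Part (1) is this applied to H/d in N(X), part (2) to h/d in N(Y). The real work is
  \<gamma>(h/d) = \<gamma>: a class (W0, x, W2) orthogonal to v has c(a W2 + b W0) = d (H/d).x, a multiple
  of d\<gamma>; as c is prime to d\<gamma> and d\<gamma> divides 2ab, also h.(W0, x, W2) = a W2 - b W0 is one.
  For part (3) an element of K(h) has the form (a l, x, b l) + t v, and subtracting d l times
  the scaled lift of u*(H/d) leaves an element of K(H/d) plus a multiple of v.
\<close>

section \<open>Integer and rational spans\<close>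

definition add_subgroup :: "'a::real_vector set \<Rightarrow> bool" where
  "add_subgroup S \<longleftrightarrow> 0 \<in> S \<and> (\<forall>x\<in>S. \<forall>y\<in>S. x + y \<in> S) \<and> (\<forall>x\<in>S. - x \<in> S)"

lemma add_subgroup_zero: "add_subgroup S \<Longrightarrow> 0 \<in> S"
  and add_subgroup_add: "add_subgroup S \<Longrightarrow> x \<in> S \<Longrightarrow> y \<in> S \<Longrightarrow> x + y \<in> S"
  and add_subgroup_minus: "add_subgroup S \<Longrightarrow> x \<in> S \<Longrightarrow> - x \<in> S"
  by (simp_all add: add_subgroup_def)

lemma add_subgroup_diff: "add_subgroup S \<Longrightarrow> x \<in> S \<Longrightarrow> y \<in> S \<Longrightarrow> x - y \<in> S"
  using add_subgroup_add add_subgroup_minus by fastforce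

lemma add_subgroup_scaleR_of_int:
  assumes "add_subgroup S" "x \<in> S"
  shows "of_int k *\<^sub>R x \<in> S"
proof (induction k rule: int_induct[where k = 0])
  case base
  then show ?case using assms by (simp add: add_subgroup_zero)
next
  case (step1 i)
  then show ?case using assms by (simp add: scaleR_add_left add_subgroup_add)
next
  case (step2 i)
  then show ?case using assms by (simp add: scaleR_diff_left add_subgroup_diff)
qed

lemma add_subgroup_sum:
  assumes "add_subgroup S" "\<And>a. a \<in> F \<Longrightarrow> f a \<in> S"
  shows "sum f F \<in> S"
  using assms(2)
  by (induction F rule: infinite_finite_induct)
     (simp_all add: add_subgroup_zero add_subgroup_add assms(1))

lemma sum_scaleR_union:
  fixes c1 c2 :: "'a::real_vector \<Rightarrow> real"
  assumes "finite F1" "finite F2"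
  shows "(\<Sum>a\<in>F1. c1 a *\<^sub>R a) + (\<Sum>a\<in>F2. c2 a *\<^sub>R a)
       = (\<Sum>a\<in>F1 \<union> F2. ((if a \<in> F1 then c1 a else 0) + (if a \<in> F2 then c2 a else 0)) *\<^sub>R a)"
proof -
  have "(\<Sum>a\<in>F1 \<union> F2. (if a \<in> Fi then ci a else 0) *\<^sub>R a) = (\<Sum>a\<in>Fi. ci a *\<^sub>R a)"
    if "Fi \<subseteq> F1 \<union> F2" for Fi and ci :: "'a \<Rightarrow> real"
    using that assms sum.inter_restrict[of "F1 \<union> F2" "\<lambda>a. ci a *\<^sub>R a" Fi]
    by (simp add: if_distrib[of "\<lambda>t. t *\<^sub>R _"] Int_absorb1 cong: if_cong)
  from this[of F1 c1] this[of F2 c2] show ?thesis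
    by (simp add: scaleR_add_left sum.distrib)
qed

lemma zspan_superset: "A \<subseteq> zspan A"
proof
  fix a assume "a \<in> A"
  then show "a \<in> zspan A"
    unfolding zspan_def by (intro CollectI exI[of _ "{a}"] exI[of _ "\<lambda>_. 1"]) simp
qed

lemma add_subgroup_zspan: "add_subgroup (zspan A)"
  unfolding add_subgroup_def
proof (intro conjI ballI)
  show "0 \<in> zspan A"
    unfolding zspan_def by (intro CollectI exI[of _ "{}"]) simp
next
  fix x y assume "x \<in> zspan A" "y \<in> zspan A"
  then obtain F1 c1 F2 c2 where F: "finite F1" "F1 \<subseteq> A" "x = (\<Sum>a\<in>F1. of_int (c1 a) *\<^sub>R a)"
      "finite F2" "F2 \<subseteq> A" "y = (\<Sum>a\<in>F2. of_int (c2 a) *\<^sub>R a)"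
    unfolding zspan_def by blast
  let ?c = "\<lambda>a. (if a \<in> F1 then c1 a else 0) + (if a \<in> F2 then c2 a else 0)"
  have "real_of_int (?c a) = (if a \<in> F1 then of_int (c1 a) else 0) + (if a \<in> F2 then of_int (c2 a) else 0)"
    for a by simp
  then have "x + y = (\<Sum>a\<in>F1 \<union> F2. of_int (?c a) *\<^sub>R a)"
    unfolding F(3,6) sum_scaleR_union[OF F(1,4)] by presburger
  then show "x + y \<in> zspan A"
    unfolding zspan_def using F by (intro CollectI exI[of _ "F1 \<union> F2"] exI[of _ ?c]) auto
next
  fix x assume "x \<in> zspan A"
  then obtain F c where F: "finite F" "F \<subseteq> A" "x = (\<Sum>a\<in>F. of_int (c a) *\<^sub>R a)"
    unfolding zspan_def by blast
  have "- x = (\<Sum>a\<in>F. of_int (- c a) *\<^sub>R a)"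
    unfolding F(3) by (simp add: sum_negf)
  then show "- x \<in> zspan A"
    unfolding zspan_def using F by (intro CollectI exI[of _ F] exI[of _ "\<lambda>a. - c a"]) auto
qed

lemma zspan_least: "add_subgroup S \<Longrightarrow> A \<subseteq> S \<Longrightarrow> zspan A \<subseteq> S"
  unfolding zspan_def by (auto intro!: add_subgroup_sum add_subgroup_scaleR_of_int)

lemma zspan_subset_qspan: "zspan A \<subseteq> qspan A"
  unfolding zspan_def qspan_def by (auto intro!: exI[of _ "\<lambda>a. of_int (_ a)"])

lemma qspan_superset: "A \<subseteq> qspan A"
proof
  fix a assume "a \<in> A"
  then show "a \<in> qspan A"
    unfolding qspan_def by (intro CollectI exI[of _ "{a}"] exI[of _ "\<lambda>_. 1"]) simp
qed

lemma qspan_add: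
  assumes "x \<in> qspan A" "y \<in> qspan A"
  shows "x + y \<in> qspan A"
proof -
  obtain F1 c1 F2 c2 where F: "finite F1" "F1 \<subseteq> A" "\<forall>a. c1 a \<in> \<rat>" "x = (\<Sum>a\<in>F1. c1 a *\<^sub>R a)"
      "finite F2" "F2 \<subseteq> A" "\<forall>a. c2 a \<in> \<rat>" "y = (\<Sum>a\<in>F2. c2 a *\<^sub>R a)"
    using assms unfolding qspan_def by blast
  let ?c = "\<lambda>a. (if a \<in> F1 then c1 a else 0) + (if a \<in> F2 then c2 a else 0)"
  have "x + y = (\<Sum>a\<in>F1 \<union> F2. ?c a *\<^sub>R a)"
    unfolding F(4,8) by (rule sum_scaleR_union[OF F(1,5)])
  moreover have "\<forall>a. ?c a \<in> \<rat>"
    using F(3,7) by simp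
  ultimately show ?thesis
    unfolding qspan_def using F by (intro CollectI exI[of _ "F1 \<union> F2"] exI[of _ ?c]) auto
qed

lemma qspan_scaleR:
  assumes "q \<in> \<rat>" "x \<in> qspan A"
  shows "q *\<^sub>R x \<in> qspan A"
proof -
  obtain F c where F: "finite F" "F \<subseteq> A" "\<forall>a. c a \<in> \<rat>" "x = (\<Sum>a\<in>F. c a *\<^sub>R a)"
    using assms(2) unfolding qspan_def by blast
  have "q *\<^sub>R x = (\<Sum>a\<in>F. (q * c a) *\<^sub>R a)"
    unfolding F(4) by (simp add: scaleR_sum_right)
  then show ?thesis
    unfolding qspan_def using F assms(1) by (intro CollectI exI[of _ F] exI[of _ "\<lambda>a. q * c a"]) auto
qed

lemma qspan_least:
  assumes "0 \<in> C" "\<And>x y. x \<in> C \<Longrightarrow> y \<in> C \<Longrightarrow> x + y \<in> C"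
    and "\<And>q x. q \<in> \<rat> \<Longrightarrow> x \<in> C \<Longrightarrow> q *\<^sub>R x \<in> C" and "A \<subseteq> C"
  shows "qspan A \<subseteq> C"
proof
  fix x assume "x \<in> qspan A"
  then obtain F c where F: "finite F" "F \<subseteq> A" "\<forall>a. c a \<in> \<rat>" "x = (\<Sum>a\<in>F. c a *\<^sub>R a)"
    unfolding qspan_def by blast
  have "(\<Sum>a\<in>F. c a *\<^sub>R a) \<in> C"
    using F(2) by (induction F rule: infinite_finite_induct) (use assms F(3) in auto)
  then show "x \<in> C" using F(4) by simp
qed

lemma qspan_zero: "0 \<in> qspan A"
  unfolding qspan_def by (intro CollectI exI[of _ "{}"] exI[of _ "\<lambda>_. 0"]) simp

lemma qspan_subset_qspan: "A \<subseteq> qspan B \<Longrightarrow> qspan A \<subseteq> qspan B"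
  by (rule qspan_least[OF qspan_zero qspan_add qspan_scaleR])

lemma qspan_subset_span: "qspan A \<subseteq> span A"
  unfolding qspan_def by (force intro: span_sum span_scale span_base)

section \<open>Integral lattices and primitive vectors\<close>

lemma lat_gamma_eqI:
  assumes "g > 0" "{B P x | x. x \<in> S} = {of_int (g * k) | k. True}"
  shows "lat_gamma B S P = g"
  unfolding lat_gamma_def
proof (rule the_equality)
  show "g > 0 \<and> {B P x | x. x \<in> S} = {of_int (g * k) | k. True}"
    using assms by blast
next
  have dvd: "g1 dvd g2" if "{of_int (g1 * k) | k. True} = ({of_int (g2 * k) | k. True} :: real set)"
    for g1 g2 :: int
  proof -
    have "(of_int (g2 * 1) :: real) \<in> {of_int (g1 * k) | k. True}"
      using that by blast
    then obtain k where "(of_int (g2 * 1) :: real) = of_int (g1 * k)"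
      by blast
    then show ?thesis
      by (simp only: of_int_eq_iff mult_1_right dvd_triv_left)
  qed
  fix g' :: int
  assume g': "g' > 0 \<and> {B P x | x. x \<in> S} = {of_int (g' * k) | k. True}"
  then have "{of_int (g * k) | k. True} = ({of_int (g' * k) | k. True} :: real set)"
    using assms(2) by simp
  then show "g' = g"
    using dvd dvd[OF sym] g' assms(1) by (simp add: zdvd_antisym_nonneg)
qed

lemma lat_primitive_multiple_dvd:
  assumes S: "add_subgroup S" and prim: "lat_primitive S P" and q: "q > 0"
    and mem: "(of_int p / of_int q) *\<^sub>R P \<in> S"
  shows "q dvd p"
proof -
  define D where "D = gcd p q"
  obtain m where m: "q = D * m"
    using gcd_dvd2[of p q] unfolding D_def dvd_def by blast
  have D: "D > 0"
    using q by (simp add: D_def)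
  then have m_pos: "m > 0"
    using q m by (simp add: zero_less_mult_iff)
  obtain s t where st: "s * p + t * q = D"
    using bezout_int[of p q] D_def by blast
  have "(of_int D / of_int q :: real) = of_int s * (of_int p / of_int q) + of_int t"
    using q st[symmetric] by (simp add: field_simps)
  then have "(of_int D / of_int q) *\<^sub>R P = of_int s *\<^sub>R ((of_int p / of_int q) *\<^sub>R P) + of_int t *\<^sub>R P"
    by (simp add: scaleR_add_left)
  also have "\<dots> \<in> S"
    using prim mem by (intro add_subgroup_add[OF S] add_subgroup_scaleR_of_int[OF S])
      (auto simp: lat_primitive_def)
  finally have "(1 / real (nat m)) *\<^sub>R P \<in> S"
    using m D m_pos by simp
  then have "\<not> nat m > 1"
    using prim unfolding lat_primitive_def by blast
  then have "q = D"
    using m m_pos by simp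
  moreover have "D dvd p"
    by (simp add: D_def)
  ultimately show ?thesis
    by simp
qed

locale integral_lattice =
  fixes B :: "'a::real_vector \<Rightarrow> 'a \<Rightarrow> real" and S :: "'a set"
  assumes bilinear: "bilinear B"
    and add_subgroup: "add_subgroup S"
    and integral: "x \<in> S \<Longrightarrow> y \<in> S \<Longrightarrow> B x y \<in> \<int>"
begin

lemma ex_pos_pairing:
  assumes P: "P \<in> S" and x0: "x0 \<in> S" "B P x0 \<noteq> 0"
  shows "\<exists>n>0. \<exists>x\<in>S. B P x = real n"
proof -
  obtain z where z: "B P x0 = of_int z"
    using integral[OF P x0(1)] by (auto elim: Ints_cases)
  show ?thesis
  proof (cases "z > 0")
    case True
    then show ?thesis using z x0 by (intro exI[of _ "nat z"]) auto
  next
    case False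
    then show ?thesis
      using z x0 add_subgroup_minus[OF add_subgroup x0(1)] bilinear_rneg[OF bilinear, of P x0]
      by (intro exI[of _ "nat (- z)"]) force
  qed
qed

lemma pairing_image_eq_multiples:
  assumes P: "P \<in> S" and g: "g > 0" "xg \<in> S" "B P xg = real g"
    and least: "\<And>n x. 0 < n \<Longrightarrow> n < g \<Longrightarrow> x \<in> S \<Longrightarrow> B P x \<noteq> real n"
  shows "{B P x | x. x \<in> S} = {of_int (int g * k) | k. True}"
proof (intro set_eqI iffI)
  fix y assume "y \<in> {B P x | x. x \<in> S}"
  then obtain x w where x: "x \<in> S" "y = B P x" "B P x = of_int w"
    using integral[OF P] by (blast elim: Ints_cases)
  define q rm where "q = w div int g" and "rm = w mod int g"
  have rm: "0 \<le> rm" "rm < int g" "w = int g * q + rm"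
    using g(1) by (simp_all add: q_def rm_def)
  have "B P (x - of_int q *\<^sub>R xg) = real (nat rm)"
    using x g rm by (simp add: bilinear_rsub[OF bilinear] bilinear_rmul[OF bilinear])
  moreover have "x - of_int q *\<^sub>R xg \<in> S"
    using x g by (intro add_subgroup_diff[OF add_subgroup] add_subgroup_scaleR_of_int[OF add_subgroup])
  ultimately have "rm = 0"
    using least[of "nat rm"] rm by fastforce
  then show "y \<in> {of_int (int g * k) | k. True}"
    using x rm by auto
next
  fix y :: real assume "y \<in> {of_int (int g * k) | k. True}"
  then obtain k where "y = of_int (int g * k)" by blast
  then have "B P (of_int k *\<^sub>R xg) = y"
    using g by (simp add: bilinear_rmul[OF bilinear])
  then show "y \<in> {B P x | x. x \<in> S}"
    using add_subgroup_scaleR_of_int[OF add_subgroup g(2)] by blast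
qed

lemma lat_gamma_image:
  assumes P: "P \<in> S" and x0: "x0 \<in> S" "B P x0 \<noteq> 0"
  shows "lat_gamma B S P > 0 \<and> {B P x | x. x \<in> S} = {of_int (lat_gamma B S P * k) | k. True}"
proof -
  define pos where "pos n \<longleftrightarrow> n > 0 \<and> (\<exists>x\<in>S. B P x = real n)" for n
  define g where "g = (LEAST n. pos n)"
  obtain n0 where "pos n0"
    using ex_pos_pairing[OF assms] unfolding pos_def by blast
  then have "pos g"
    unfolding g_def by (rule LeastI)
  then obtain xg where g: "g > 0" "xg \<in> S" "B P xg = real g"
    unfolding pos_def by blast
  have "B P x \<noteq> real n" if n: "0 < n" "n < g" and x: "x \<in> S" for n x
  proof
    assume "B P x = real n"
    then have "pos n"
      using n x unfolding pos_def by blast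
    moreover have "\<not> pos n"
      using not_less_Least[of n pos] n(2) unfolding g_def .
    ultimately show False
      by contradiction
  qed
  then have image: "{B P x | x. x \<in> S} = {of_int (int g * k) | k. True}"
    by (rule pairing_image_eq_multiples[OF P g])
  have "lat_gamma B S P = int g"
    by (rule lat_gamma_eqI) (use g(1) image in simp_all)
  then show ?thesis
    using g(1) image by simp
qed

lemma add_subgroup_orth: "add_subgroup (orth B S P)"
  using add_subgroup unfolding add_subgroup_def orth_def
  by (simp add: bilinear_radd[OF bilinear] bilinear_rneg[OF bilinear] bilinear_rzero[OF bilinear])

end

locale positive_primitive_vector = integral_lattice +
  fixes P :: "'a::real_vector"
  assumes primitive: "lat_primitive S P" and square_pos: "B P P > 0"
begin

abbreviation "K \<equiv> orth B S P"
abbreviation "\<gamma> \<equiv> lat_gamma B S P"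

lemma P_in: "P \<in> S"
  using primitive by (simp add: lat_primitive_def)

lemma gamma_pos: "\<gamma> > 0"
  and gamma_image: "{B P x | x. x \<in> S} = {of_int (\<gamma> * k) | k. True}"
  using lat_gamma_image[OF P_in P_in] square_pos by auto

lemma square_eq_gamma_mult:
  obtains N where "N > 0" "B P P = of_int (\<gamma> * N)"
proof -
  obtain N where N: "B P P = of_int (\<gamma> * N)"
    using gamma_image P_in by blast
  then have "N > 0"
    using square_pos gamma_pos by (simp add: zero_less_mult_iff)
  with N that show thesis by blast
qed

lemma P_pstar: "B P (pstar B P) = 1"
  unfolding pstar_def using square_pos by (simp add: bilinear_rmul[OF bilinear])

lemma ustar_perp:
  assumes "u \<in> ustar B S P"
  shows "B P u = 0"
proof -
  have "linear (B P)"
    using bilinear unfolding bilinear_def by blast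
  moreover have "u \<in> span K"
    using assms qspan_subset_span unfolding ustar_def dual_def by blast
  ultimately show ?thesis
    using real_vector.linear_eq_0_on_span[of "B P" K u] by (simp add: orth_def)
qed

lemma ustar_shift_in: "u \<in> ustar B S P \<Longrightarrow> of_int \<gamma> *\<^sub>R pstar B P + u \<in> S"
  by (simp add: ustar_def)

lemma pairing_ustar_shift: "u \<in> ustar B S P \<Longrightarrow> B P (of_int \<gamma> *\<^sub>R pstar B P + u) = of_int \<gamma>"
  by (simp add: bilinear_radd[OF bilinear] bilinear_rmul[OF bilinear] P_pstar ustar_perp)

lemma ustar_multiple_in_K:
  assumes u: "u \<in> ustar B S P"
  shows "(B P P / of_int \<gamma>) *\<^sub>R u \<in> K"
proof -
  obtain N where N: "N > 0" "B P P = of_int (\<gamma> * N)"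
    using square_eq_gamma_mult .
  have "(B P P / of_int \<gamma>) *\<^sub>R u = of_int N *\<^sub>R (of_int \<gamma> *\<^sub>R pstar B P + u) - P"
    using N gamma_pos unfolding pstar_def by (simp add: algebra_simps)
  also have "\<dots> \<in> S"
    using P_in ustar_shift_in[OF u]
    by (intro add_subgroup_diff[OF add_subgroup] add_subgroup_scaleR_of_int[OF add_subgroup])
  finally have "(B P P / of_int \<gamma>) *\<^sub>R u \<in> S" .
  moreover have "B P ((B P P / of_int \<gamma>) *\<^sub>R u) = 0"
    using ustar_perp[OF u] bilinear_rmul[OF bilinear] by simp
  ultimately show ?thesis
    by (simp add: orth_def)
qed

lemma ustar_nonempty: "ustar B S P \<noteq> {}"
proof -
  have "of_int (\<gamma> * 1) \<in> {B P x | x. x \<in> S}"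
    unfolding gamma_image by blast
  then obtain x1 where x1: "x1 \<in> S" "B P x1 = of_int \<gamma>"
    by auto
  obtain N where N: "N > 0" "B P P = of_int (\<gamma> * N)"
    using square_eq_gamma_mult .
  define u where "u = x1 - of_int \<gamma> *\<^sub>R pstar B P"
  have perp: "B P u = 0"
    unfolding u_def by (simp add: bilinear_rsub[OF bilinear] bilinear_rmul[OF bilinear] P_pstar x1)
  have "of_int N *\<^sub>R u = of_int N *\<^sub>R x1 - P"
    unfolding u_def pstar_def N using gamma_pos N by (simp add: algebra_simps)
  also have "\<dots> \<in> S"
    using x1 P_in by (intro add_subgroup_diff[OF add_subgroup] add_subgroup_scaleR_of_int[OF add_subgroup])
  finally have "of_int N *\<^sub>R u \<in> K"
    using perp by (simp add: orth_def bilinear_rmul[OF bilinear])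
  then have "(1 / of_int N) *\<^sub>R (of_int N *\<^sub>R u) \<in> qspan K"
    by (intro qspan_scaleR qspan_superset[THEN subsetD]) simp_all
  then have "u \<in> qspan K"
    using N by simp
  moreover have "B u k \<in> \<int>" if "k \<in> K" for k
  proof -
    have "B (pstar B P) k = 0"
      using that unfolding pstar_def orth_def by (simp add: bilinear_lmul[OF bilinear])
    then have "B u k = B x1 k"
      unfolding u_def by (simp add: bilinear_lsub[OF bilinear] bilinear_lmul[OF bilinear])
    then show ?thesis
      using that x1 integral by (simp add: orth_def)
  qed
  moreover have "of_int \<gamma> *\<^sub>R pstar B P + u \<in> S"
    using x1 by (simp add: u_def)
  ultimately have "u \<in> ustar B S P"
    unfolding ustar_def dual_def by blast
  then show ?thesis by blast
qed

lemma zspan_decomposition: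
  assumes u: "u \<in> ustar B S P"
  shows "S = zspan ({P} \<union> K \<union> {of_int \<gamma> *\<^sub>R pstar B P + u})"
    (is "S = zspan ?A")
proof
  let ?x = "of_int \<gamma> *\<^sub>R pstar B P + u"
  show "zspan ?A \<subseteq> S"
    using P_in ustar_shift_in[OF u] by (intro zspan_least add_subgroup) (auto simp: orth_def)
  show "S \<subseteq> zspan ?A"
  proof
    fix y assume y: "y \<in> S"
    obtain k where k: "B P y = of_int (\<gamma> * k)"
      using gamma_image y by blast
    have "B P (y - of_int k *\<^sub>R ?x) = 0"
      by (simp add: bilinear_rsub[OF bilinear] bilinear_rmul[OF bilinear] k pairing_ustar_shift[OF u])
    moreover have "y - of_int k *\<^sub>R ?x \<in> S"
      using y ustar_shift_in[OF u]
      by (intro add_subgroup_diff[OF add_subgroup] add_subgroup_scaleR_of_int[OF add_subgroup])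
    ultimately have "y - of_int k *\<^sub>R ?x \<in> zspan ?A"
      by (intro zspan_superset[THEN subsetD]) (simp add: orth_def)
    moreover have "of_int k *\<^sub>R ?x \<in> zspan ?A"
      by (intro add_subgroup_scaleR_of_int[OF add_subgroup_zspan] zspan_superset[THEN subsetD]) simp
    ultimately have "(y - of_int k *\<^sub>R ?x) + of_int k *\<^sub>R ?x \<in> zspan ?A"
      by (rule add_subgroup_add[OF add_subgroup_zspan])
    then show "y \<in> zspan ?A" by simp
  qed
qed

lemma coset_order_ustar:
  assumes u: "u \<in> ustar B S P"
  shows "real (coset_order K u) = B P P / of_int \<gamma>"
proof -
  obtain N where N: "N > 0" "B P P = of_int (\<gamma> * N)"
    using square_eq_gamma_mult .
  have NK: "real (nat N) *\<^sub>R u \<in> K"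
    using ustar_multiple_in_K[OF u] N gamma_pos by simp
  have "nat N \<le> n" if n: "n > 0" "real n *\<^sub>R u \<in> K" for n
  proof (rule ccontr)
    assume "\<not> nat N \<le> n"
    then have lt: "int n < N" by simp
    have "of_int (int n) *\<^sub>R (of_int \<gamma> *\<^sub>R pstar B P + u) - real n *\<^sub>R u \<in> S"
      using n ustar_shift_in[OF u] unfolding orth_def
      by (intro add_subgroup_diff[OF add_subgroup] add_subgroup_scaleR_of_int[OF add_subgroup]) auto
    moreover have "of_int (int n) *\<^sub>R (of_int \<gamma> *\<^sub>R pstar B P + u) - real n *\<^sub>R u
        = (of_int (int n) / of_int N) *\<^sub>R P"
      unfolding pstar_def N using gamma_pos N by (simp add: algebra_simps)
    ultimately have "N dvd int n"
      using lat_primitive_multiple_dvd[OF add_subgroup primitive N(1)] by simp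
    then show False
      using lt n zdvd_imp_le[of N "int n"] by simp
  qed
  then have "coset_order K u = nat N"
    unfolding coset_order_def using N(1) NK by (intro Least_equality) simp_all
  then show ?thesis
    using N gamma_pos by simp
qed

end

section \<open>The lattices N(X), Mukai lattice and N(Y)\<close>

lemma bilinear_bf: "bilinear (bf G)"
  unfolding bilinear_def linear_iff bf_def
  by (simp add: inner_add_left inner_add_right matrix_vector_right_distrib matrix_vector_mult_scaleR)

lemma bf_commute:
  assumes "\<forall>i j. G $ i $ j = G $ j $ i"
  shows "bf G x y = bf G y x"
proof -
  have "transpose G = G"
    using assms by (simp add: transpose_def vec_eq_iff)
  then have "x v* G = G *v x"
    by (metis transpose_matrix_vector)
  then show ?thesis
    unfolding bf_def by (metis dot_lmul_matrix inner_commute)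
qed

lemma add_subgroup_NXlat: "add_subgroup NXlat"
  unfolding add_subgroup_def NXlat_def by (auto intro: Ints_add Ints_minus)

lemma integral_lattice_NXlat:
  fixes G :: "real^'n^'n"
  assumes "\<forall>i j. G $ i $ j \<in> \<int>"
  shows "integral_lattice (bf G) NXlat"
proof
  fix x y :: "real^'n" assume "x \<in> NXlat" "y \<in> NXlat"
  then show "bf G x y \<in> \<int>"
    using assms unfolding bf_def inner_vec_def matrix_vector_mult_def NXlat_def
    by (simp add: sum_distrib_left) (intro Ints_sum Ints_mult; simp)
qed (simp_all add: bilinear_bf add_subgroup_NXlat)

lemma lat_primitive_NXlat_Ints:
  assumes prim: "lat_primitive NXlat P" and tP: "t *\<^sub>R P \<in> NXlat"
  shows "t \<in> \<int>"
proof -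
  have "(1 / real (2::nat)) *\<^sub>R P \<notin> NXlat"
    using prim unfolding lat_primitive_def by (simp del: of_nat_numeral)
  then have "P \<noteq> 0"
    using add_subgroup_zero[OF add_subgroup_NXlat] by auto
  then obtain i where i: "P $ i \<noteq> 0"
    by (auto simp: vec_eq_iff)
  have "P $ i \<in> \<int>" "(t *\<^sub>R P) $ i \<in> \<int>"
    using prim tP unfolding lat_primitive_def NXlat_def by blast+
  then obtain m p where mp: "P $ i = of_int m" "t * of_int m = of_int p"
    by (auto elim!: Ints_cases)
  obtain q n where qn: "q > 0" "t = of_int n / of_int q"
  proof (cases "m > 0")
    case True
    then show thesis using that[of m p] mp by (simp add: field_simps)
  next
    case False
    then have "- m > 0" using i mp by simp
    then show thesis using that[of "- m" "- p"] mp by (simp add: field_simps)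
  qed
  then have "q dvd n"
    using lat_primitive_multiple_dvd[OF add_subgroup_NXlat prim] tP by simp
  then obtain k where "n = q * k"
    by (elim dvdE)
  then show ?thesis
    using qn by simp
qed

lemma bilinear_mukai: "bilinear (mukai G)"
  using bilinear_bf[of G]
  unfolding bilinear_def linear_iff mukai_def
  by (simp add: algebra_simps)

lemma mukai_commute:
  assumes "\<forall>i j. G $ i $ j = G $ j $ i"
  shows "mukai G x y = mukai G y x"
  unfolding mukai_def using bf_commute[OF assms] by (simp add: algebra_simps)

lemma add_subgroup_mukai_lat: "add_subgroup mukai_lat"
  using add_subgroup_NXlat
  unfolding add_subgroup_def mukai_lat_def by (auto intro: Ints_add Ints_minus)

lemma NYlat_intro: "w \<in> mukai_lat \<Longrightarrow> mukai G v w = 0 \<Longrightarrow> w + t *\<^sub>R v \<in> NYlat G v"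
  unfolding NYlat_def by blast

lemma NYlat_cases:
  assumes "y \<in> NYlat G v"
  obtains W0 x W2 t where "y = (of_int W0, x, of_int W2) + t *\<^sub>R v" "x \<in> NXlat"
    "mukai G v (of_int W0, x, of_int W2) = 0"
proof -
  obtain w t where "y = w + t *\<^sub>R v" "w \<in> mukai_lat" "mukai G v w = 0"
    using assms unfolding NYlat_def by blast
  then show thesis
    using that unfolding mukai_lat_def by (cases w) (auto elim!: Ints_cases)
qed

lemma add_subgroup_NYlat: "add_subgroup (NYlat G v)"
  unfolding add_subgroup_def
proof (intro conjI ballI)
  show "0 \<in> NYlat G v"
    using NYlat_intro[OF add_subgroup_zero[OF add_subgroup_mukai_lat], of G v 0]
    by (simp add: bilinear_rzero[OF bilinear_mukai])
next
  fix x y assume "x \<in> NYlat G v" "y \<in> NYlat G v"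
  then obtain w t w' t' where wt: "x = w + t *\<^sub>R v" "y = w' + t' *\<^sub>R v"
      "w \<in> mukai_lat" "w' \<in> mukai_lat" "mukai G v w = 0" "mukai G v w' = 0"
    unfolding NYlat_def by blast
  then have "x + y = (w + w') + (t + t') *\<^sub>R v"
    by (simp add: scaleR_add_left)
  also have "\<dots> \<in> NYlat G v"
    using wt by (intro NYlat_intro add_subgroup_add[OF add_subgroup_mukai_lat])
      (simp_all add: bilinear_radd[OF bilinear_mukai])
  finally show "x + y \<in> NYlat G v" .
next
  fix x assume "x \<in> NYlat G v"
  then obtain w t where "x = w + t *\<^sub>R v" "w \<in> mukai_lat" "mukai G v w = 0"
    unfolding NYlat_def by blast
  then have "- x = (- w) + (- t) *\<^sub>R v"
    by simp
  also have "\<dots> \<in> NYlat G v"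
    using \<open>w \<in> mukai_lat\<close> \<open>mukai G v w = 0\<close>
    by (intro NYlat_intro add_subgroup_minus[OF add_subgroup_mukai_lat]) (simp_all add: bilinear_rneg[OF bilinear_mukai])
  finally show "- x \<in> NYlat G v" .
qed

lemma integral_lattice_NYlat:
  assumes G_int: "\<forall>i j. G $ i $ j \<in> \<int>" and G_sym: "\<forall>i j. G $ i $ j = G $ j $ i"
    and isotropic: "mukai G v v = 0"
  shows "integral_lattice (mukai G) (NYlat G v)"
proof
  fix x y assume "x \<in> NYlat G v" "y \<in> NYlat G v"
  then obtain w t w' t' where x: "x = w + t *\<^sub>R v" "w \<in> mukai_lat" "mukai G v w = 0"
      and y: "y = w' + t' *\<^sub>R v" "w' \<in> mukai_lat" "mukai G v w' = 0"
    unfolding NYlat_def by blast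
  have "mukai G x y = mukai G w w'"
    using x(3) y(3) isotropic mukai_commute[OF G_sym, of w v] unfolding x(1) y(1)
    by (simp add: bilinear_ladd[OF bilinear_mukai] bilinear_radd[OF bilinear_mukai]
        bilinear_lmul[OF bilinear_mukai] bilinear_rmul[OF bilinear_mukai])
  also have "\<dots> \<in> \<int>"
    using x(2) y(2) integral_lattice.integral[OF integral_lattice_NXlat[OF G_int]]
    unfolding mukai_lat_def mukai_def by (intro Ints_add Ints_minus Ints_mult) auto
  finally show "mukai G x y \<in> \<int>" .
qed (simp_all add: bilinear_mukai add_subgroup_NYlat)

lemma ex_mult_cong_pm_one:
  fixes a b c d :: int
  assumes "coprime a b" "coprime c d" "d dvd a * b"
  shows "\<exists>j. d dvd a * (j * c - 1) \<and> d dvd b * (j * c + 1)"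
proof -
  obtain \<alpha> \<beta> where ab: "\<alpha> * a + \<beta> * b = 1"
    using bezout_int[of a b] assms(1) by auto
  obtain \<mu> \<nu> where cd: "\<mu> * c + \<nu> * d = 1"
    using bezout_int[of c d] assms(2) by auto
  \<comment> \<open>y is 1 modulo b and -1 modulo a, and \<mu> inverts c modulo d\<close>
  define y where "y = \<alpha> * a - \<beta> * b"
  have mc: "\<mu> * c = 1 - \<nu> * d"
    using cd by linarith
  have "a * (\<mu> * y * c - 1) = a * y * (\<mu> * c) - a"
    by (simp add: algebra_simps)
  also have "\<dots> = a * (y - 1) - d * (\<nu> * a * y)"
    unfolding mc by (simp add: algebra_simps)
  also have "a * (y - 1) = - 2 * \<beta> * (a * b)"
    unfolding y_def ab[symmetric] by (simp add: algebra_simps)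
  finally have 1: "d dvd a * (\<mu> * y * c - 1)"
    using assms(3) by simp
  have "b * (\<mu> * y * c + 1) = b * y * (\<mu> * c) + b"
    by (simp add: algebra_simps)
  also have "\<dots> = b * (y + 1) - d * (\<nu> * b * y)"
    unfolding mc by (simp add: algebra_simps)
  also have "b * (y + 1) = 2 * \<alpha> * (a * b)"
    unfolding y_def ab[symmetric] by (simp add: algebra_simps)
  finally have 2: "d dvd b * (\<mu> * y * c + 1)"
    using assms(3) by simp
  from 1 2 show ?thesis by blast
qed

lemma coprime_dvd_diff_of_dvd_add:
  fixes a b D w0 w2 :: int
  assumes "coprime a b" "D dvd 2 * a * b" "D dvd a * w2 + b * w0"
  shows "D dvd a * w2 - b * w0"
proof -
  obtain \<alpha> \<beta> where ab: "\<alpha> * a + \<beta> * b = 1"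
    using bezout_int[of a b] assms(1) by auto
  have "a * w2 - b * w0 = a * w2 + b * w0 - 2 * b * w0 * (\<alpha> * a + \<beta> * b)"
    using ab by simp
  also have "\<dots> = (a * w2 + b * w0) * (1 - 2 * \<beta> * b) - 2 * a * b * (\<alpha> * w0 - \<beta> * w2)"
    by (simp add: algebra_simps)
  finally show ?thesis
    using assms(2,3) by simp
qed

section \<open>The isotropic Mukai vector (r, H, s)\<close>

locale isotropic_mukai_vector =
  fixes G :: "real^'n^'n" and H :: "real^'n" and r s d c a b :: nat and g :: int
    and Ht :: "real^'n" and v h ht :: "real \<times> (real^'n) \<times> real"
    and NY Kh :: "(real \<times> (real^'n) \<times> real) set" and KHt :: "(real^'n) set"
    and \<iota> :: "real^'n \<Rightarrow> real \<times> (real^'n) \<times> real"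
  assumes G_int: "\<forall>i j. G $ i $ j \<in> \<int>"
    and G_sym: "\<forall>i j. G $ i $ j = G $ j $ i"
    and G_even: "\<forall>x\<in>NXlat. bf G x x \<in> {2 * of_int k | k. True}"
    and r_pos: "r > 0" and s_pos: "s > 0" and d_pos: "d > 0"
    and H_sq: "bf G H H = 2 * real r * real s"
    and Ht_def: "Ht = (1 / real d) *\<^sub>R H"
    and Ht_prim: "lat_primitive NXlat Ht"
    and v_def: "v = (real r, H, real s)"
    and c_def: "c = gcd r s" and a_def: "a = r div gcd r s" and b_def: "b = s div gcd r s"
    and g_def: "g = lat_gamma (bf G) NXlat Ht"
    and coprime: "coprime (int c) (int d * g)"
    and KHt_def: "KHt = orth (bf G) NXlat Ht"
    and NY_def: "NY = NYlat G v"
    and h_def: "h = (- real a, 0, real b)"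
    and ht_def: "ht = (1 / real d) *\<^sub>R h"
    and Kh_def: "Kh = orth (mukai G) NY h"
    and \<iota>_def: "\<iota> = (\<lambda>k. (0, k, 0))"
begin

lemma r_eq: "r = c * a" and s_eq: "s = c * b"
  unfolding a_def b_def c_def by simp_all

lemma c_pos: "c > 0"
  using r_pos unfolding c_def by simp

lemma a_pos: "a > 0" and b_pos: "b > 0"
  using r_pos s_pos unfolding r_eq s_eq by simp_all

lemma coprime_a_b: "coprime (int a) (int b)"
  using div_gcd_coprime[of r s] r_pos unfolding a_def b_def by simp

lemma coprime_c_d: "coprime (int c) (int d)"
  using coprime by simp

lemma H_eq: "H = real d *\<^sub>R Ht"
  unfolding Ht_def using d_pos by simp

lemma Ht_in: "Ht \<in> NXlat"
  using Ht_prim by (simp add: lat_primitive_def)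

lemma Ht_square_mult: "real d ^ 2 * bf G Ht Ht = 2 * real a * real b * real c ^ 2"
proof -
  have "bf G H H = real d ^ 2 * bf G Ht Ht"
    unfolding H_eq by (simp add: bilinear_lmul[OF bilinear_bf] bilinear_rmul[OF bilinear_bf] power2_eq_square)
  then show ?thesis
    using H_sq unfolding r_eq s_eq by (simp add: power2_eq_square ac_simps)
qed

lemma Ht_square: "bf G Ht Ht = 2 * real a * real b * real c ^ 2 / real d ^ 2"
  using Ht_square_mult d_pos by (simp add: eq_divide_eq ac_simps)

sublocale X: positive_primitive_vector "bf G" NXlat Ht
  using integral_lattice_NXlat[OF G_int] Ht_prim Ht_square a_pos b_pos c_pos d_pos
  by (simp add: positive_primitive_vector_def positive_primitive_vector_axioms_def)

lemma gamma_pos: "g > 0"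
  using X.gamma_pos by (simp add: g_def)

lemma Ht_square_of_int: "real d ^ 2 * bf G Ht Ht = real_of_int (int a * int b * int c ^ 2) * 2"
  using d_pos unfolding Ht_square by simp

text \<open>Evenness of the form is what removes the factor 2 from d^2 (H/d)^2 = 2abc^2.\<close>
lemma d_square_dvd: "int d ^ 2 dvd int a * int b"
proof -
  have "bf G Ht Ht \<in> {2 * of_int k | k. True}"
    using G_even Ht_in by blast
  then obtain e where "bf G Ht Ht = 2 * of_int e"
    by blast
  then have "real_of_int (int d ^ 2 * e) = real_of_int (int a * int b * int c ^ 2)"
    using Ht_square_of_int by simp
  then have "int c ^ 2 * (int a * int b) = int d ^ 2 * e"
    unfolding of_int_eq_iff by (simp add: ac_simps)
  then have "int d ^ 2 dvd int c ^ 2 * (int a * int b)"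
    by (rule dvdI)
  moreover have "coprime (int d ^ 2) (int c ^ 2)"
    using coprime_c_d by (simp add: coprime_commute)
  ultimately show ?thesis
    by (simp add: coprime_dvd_mult_right_iff)
qed

lemma index_integral:
  obtains N where "N > 0" "2 * int a * int b = int d ^ 2 * g * N"
    "2 * real a * real b / (real d ^ 2 * of_int g) = of_int N"
proof -
  obtain M where M: "M > 0" "bf G Ht Ht = of_int (g * M)"
    using X.square_eq_gamma_mult unfolding g_def .
  have "real_of_int (int d ^ 2 * g * M) = real_of_int (int a * int b * int c ^ 2 * 2)"
    using Ht_square_of_int unfolding M(2) by simp
  then have eq: "int c ^ 2 * (2 * int a * int b) = (int d ^ 2 * g) * M"
    unfolding of_int_eq_iff by (simp add: ac_simps)
  moreover have "coprime (int c ^ 2) (int d ^ 2 * g)"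
    using coprime by simp
  ultimately have "int c ^ 2 dvd M"
    using dvdI[OF eq[symmetric]] by (simp add: coprime_dvd_mult_right_iff)
  then obtain N where N: "M = int c ^ 2 * N"
    by blast
  have "N > 0"
    using M(1) c_pos by (simp add: N zero_less_mult_iff)
  moreover have NI: "2 * int a * int b = int d ^ 2 * g * N"
    using eq c_pos unfolding N by (simp add: ac_simps)
  moreover have "2 * real a * real b / (real d ^ 2 * of_int g) = of_int N"
  proof -
    have "2 * real a * real b = real_of_int (int d ^ 2 * g * N)"
      unfolding NI[symmetric] by simp
    then show ?thesis
      using gamma_pos d_pos by (simp add: divide_eq_eq)
  qed
  ultimately show thesis by (rule that)
qed

lemma part_one:
  "pstar (bf G) Ht = (real d ^ 2 / (2 * real a * real b * real c ^ 2)) *\<^sub>R Ht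
   \<and> ustar (bf G) NXlat Ht \<noteq> {}
   \<and> (\<forall>u \<in> ustar (bf G) NXlat Ht.
        NXlat = zspan ({Ht} \<union> KHt \<union> {of_int g *\<^sub>R pstar (bf G) Ht + u})
      \<and> real (coset_order KHt u) = 2 * real a * real b * real c ^ 2 / (real d ^ 2 * of_int g))"
proof (intro conjI ballI)
  show "pstar (bf G) Ht = (real d ^ 2 / (2 * real a * real b * real c ^ 2)) *\<^sub>R Ht"
    unfolding pstar_def Ht_square by simp
  show "ustar (bf G) NXlat Ht \<noteq> {}"
    by (rule X.ustar_nonempty)
  fix u assume u: "u \<in> ustar (bf G) NXlat Ht"
  show "NXlat = zspan ({Ht} \<union> KHt \<union> {of_int g *\<^sub>R pstar (bf G) Ht + u})"
    unfolding KHt_def g_def by (rule X.zspan_decomposition[OF u])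
  show "real (coset_order KHt u) = 2 * real a * real b * real c ^ 2 / (real d ^ 2 * of_int g)"
    unfolding KHt_def X.coset_order_ustar[OF u] Ht_square g_def[symmetric] by simp
qed

lemma scaleR_ustar_eq:
  "q *\<^sub>R u = q *\<^sub>R (of_int g *\<^sub>R pstar (bf G) Ht + u)
     - (q * of_int g * real d ^ 2 / (2 * real a * real b * real c ^ 2)) *\<^sub>R Ht"
  unfolding pstar_def Ht_square by (simp add: algebra_simps)

lemma v_isotropic: "mukai G v v = 0"
  unfolding v_def mukai_def using H_sq by simp

lemma mukai_v_h: "mukai G v h = 0"
  unfolding v_def h_def mukai_def r_eq s_eq by (simp add: bilinear_rzero[OF bilinear_bf])

lemma mukai_h_v: "mukai G h v = 0"
  using mukai_v_h mukai_commute[OF G_sym] by metis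

lemma h_square: "mukai G h h = 2 * real a * real b"
  unfolding h_def mukai_def by (simp add: bilinear_rzero[OF bilinear_bf])

lemma mukai_ht: "mukai G ht y = mukai G h y / real d"
  unfolding ht_def by (simp add: bilinear_lmul[OF bilinear_mukai])

lemma mukai_v_ht: "mukai G v ht = 0"
  using mukai_h_v mukai_commute[OF G_sym, of v ht] by (simp add: mukai_ht)

lemma integral_lattice_NY: "integral_lattice (mukai G) NY"
  unfolding NY_def by (rule integral_lattice_NYlat[OF G_int G_sym v_isotropic])

lemma h_in_NY: "h \<in> NY"
  using NYlat_intro[of h G v 0] mukai_v_h
  unfolding NY_def h_def mukai_lat_def NXlat_def by simp

lemma ht_in_NY: "ht \<in> NY"
proof -
  have "int d dvd int a * int b"
    using d_square_dvd by (simp add: power2_eq_square dvd_mult_left)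
  then obtain j where "int d dvd int a * (j * int c - 1)" "int d dvd int b * (j * int c + 1)"
    using ex_mult_cong_pm_one[OF coprime_a_b coprime_c_d] by blast
  then obtain k0 k2 where k0: "int a * (j * int c - 1) = int d * k0"
      and k2: "int b * (j * int c + 1) = int d * k2"
    unfolding dvd_def by blast
  define w where "w = ht + (of_int j / real d) *\<^sub>R v"
  have "real a * (of_int j * real c - 1) = real d * of_int k0"
    using arg_cong[OF k0, of real_of_int] by simp
  moreover have "real b * (of_int j * real c + 1) = real d * of_int k2"
    using arg_cong[OF k2, of real_of_int] by simp
  ultimately have "w = (of_int k0, of_int j *\<^sub>R Ht, of_int k2)"
    unfolding w_def ht_def h_def v_def H_eq r_eq s_eq using d_pos
    by (simp add: field_simps)
  then have "w \<in> mukai_lat"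
    using add_subgroup_scaleR_of_int[OF add_subgroup_NXlat Ht_in] by (simp add: mukai_lat_def)
  moreover have "mukai G v w = 0"
    unfolding w_def by (simp add: bilinear_radd[OF bilinear_mukai] bilinear_rmul[OF bilinear_mukai]
        mukai_v_ht v_isotropic)
  ultimately have "w + (- (of_int j / real d)) *\<^sub>R v \<in> NY"
    unfolding NY_def by (rule NYlat_intro)
  then show ?thesis
    by (simp add: w_def)
qed

lemma ht_primitive: "lat_primitive NY ht"
  unfolding lat_primitive_def
proof (intro conjI allI impI notI ht_in_NY)
  fix n :: nat assume n: "n > 1" and mem: "(1 / real n) *\<^sub>R ht \<in> NY"
  obtain W0 x W2 t where y: "(1 / real n) *\<^sub>R ht = (of_int W0, x, of_int W2) + t *\<^sub>R v"
      and x: "x \<in> NXlat"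
    using mem unfolding NY_def by (rule NYlat_cases) blast
  have "x = (- (t * real d)) *\<^sub>R Ht"
    using arg_cong[OF y, of "\<lambda>z. fst (snd z)"] unfolding ht_def h_def v_def H_eq
    by (simp add: eq_neg_iff_add_eq_0 add.commute)
  then have "t * real d \<in> \<int>"
    using lat_primitive_NXlat_Ints[OF Ht_prim] x by (metis Ints_minus minus_minus)
  then obtain J where J: "t * real d = of_int J"
    by (elim Ints_cases)
  have "- real a = real n * (real d * of_int W0 + (t * real d) * real c * real a)"
    using arg_cong[OF y, of fst] n d_pos unfolding ht_def h_def v_def r_eq
    by (simp add: field_simps)
  then have "real_of_int (- int a) = real_of_int (int n * (int d * W0 + J * int c * int a))"
    unfolding J by simp
  then have "int n dvd int a"
    unfolding of_int_eq_iff by (metis dvd_minus_iff dvd_triv_left)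
  moreover have "real b = real n * (real d * of_int W2 + (t * real d) * real c * real b)"
    using arg_cong[OF y, of "\<lambda>z. snd (snd z)"] n d_pos unfolding ht_def h_def v_def s_eq
    by (simp add: field_simps)
  then have "real_of_int (int b) = real_of_int (int n * (int d * W2 + J * int c * int b))"
    unfolding J by simp
  then have "int n dvd int b"
    unfolding of_int_eq_iff by (metis dvd_triv_left)
  ultimately have "is_unit (int n)"
    using coprime_a_b coprime_common_divisor by blast
  then show False
    using n by simp
qed

lemma mukai_ht_in_gamma_multiples:
  assumes "y \<in> NY"
  shows "\<exists>k. mukai G ht y = of_int (g * k)"
proof -
  obtain W0 x W2 t where y: "y = (of_int W0, x, of_int W2) + t *\<^sub>R v" "x \<in> NXlat"
      "mukai G v (of_int W0, x, of_int W2) = 0"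
    using assms unfolding NY_def by (rule NYlat_cases)
  obtain k where k: "bf G Ht x = of_int (g * k)"
    using X.gamma_image y(2) unfolding g_def by blast
  have "real_of_int (int c * (int a * W2 + int b * W0)) = real_of_int (int d * g * k)"
    using y(3) k unfolding mukai_def v_def H_eq r_eq s_eq
    by (simp add: bilinear_lmul[OF bilinear_bf] algebra_simps)
  then have "int d * g dvd int c * (int a * W2 + int b * W0)"
    unfolding of_int_eq_iff by (metis dvd_triv_left)
  then have "int d * g dvd int a * W2 + int b * W0"
    using coprime by (simp add: coprime_commute coprime_dvd_mult_right_iff)
  moreover obtain N where "2 * int a * int b = int d ^ 2 * g * N"
    using index_integral .
  then have "int d * g dvd 2 * int a * int b"
    by (simp add: power2_eq_square)
  ultimately have "int d * g dvd int a * W2 - int b * W0"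
    using coprime_dvd_diff_of_dvd_add[OF coprime_a_b] by blast
  then obtain k' where k': "int a * W2 - int b * W0 = int d * g * k'"
    by (elim dvdE)
  have "mukai G ht y = mukai G h (of_int W0, x, of_int W2) / real d"
    unfolding y(1) mukai_ht
    by (simp add: bilinear_radd[OF bilinear_mukai] bilinear_rmul[OF bilinear_mukai] mukai_h_v)
  also have "mukai G h (of_int W0, x, of_int W2) = real a * of_int W2 - real b * of_int W0"
    unfolding h_def mukai_def by (simp add: bilinear_lzero[OF bilinear_bf])
  also have "real a * of_int W2 - real b * of_int W0 = real d * of_int (g * k')"
    using arg_cong[OF k', of real_of_int] by simp
  finally show ?thesis
    using d_pos by auto
qed

lemma mukai_ht_attains_gamma: "\<exists>y\<in>NY. mukai G ht y = of_int g"
proof -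
  have "of_int (g * 1) \<in> {bf G Ht x | x. x \<in> NXlat}"
    unfolding X.gamma_image g_def by blast
  then obtain x1 where x1: "x1 \<in> NXlat" "bf G Ht x1 = of_int g"
    by auto
  obtain \<alpha> \<beta> where \<alpha>\<beta>: "\<alpha> * int a + \<beta> * int b = 1"
    using bezout_int[of "int a" "int b"] coprime_a_b by auto
  define y :: "real \<times> (real^'n) \<times> real"
    where "y = (of_int (- int d * g * \<beta>), of_int (int c * (int a * \<alpha> - int b * \<beta>)) *\<^sub>R x1,
      of_int (int d * g * \<alpha>))"
  have "y \<in> mukai_lat"
    using add_subgroup_scaleR_of_int[OF add_subgroup_NXlat x1(1)]
    unfolding y_def mukai_lat_def by (simp del: of_int_mult)
  moreover have "mukai G v y = 0"
    using x1 unfolding y_def v_def mukai_def H_eq r_eq s_eq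
    by (simp add: bilinear_lmul[OF bilinear_bf] bilinear_rmul[OF bilinear_bf] bilinear_rsub[OF bilinear_bf]
        algebra_simps)
  ultimately have "y + 0 *\<^sub>R v \<in> NY"
    unfolding NY_def by (rule NYlat_intro)
  moreover have "mukai G ht y = of_int g"
  proof -
    have "mukai G h y = real d * of_int g * (of_int \<alpha> * real a + of_int \<beta> * real b)"
      unfolding y_def h_def mukai_def by (simp add: bilinear_lzero[OF bilinear_bf] algebra_simps)
    also have "of_int \<alpha> * real a + of_int \<beta> * real b = 1"
      using arg_cong[OF \<alpha>\<beta>, of real_of_int] by simp
    finally show ?thesis
      using d_pos by (simp add: mukai_ht)
  qed
  ultimately show ?thesis
    by auto
qed

lemma gamma_image_ht: "{mukai G ht y | y. y \<in> NY} = {of_int (g * k) | k. True}"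
proof (intro set_eqI iffI)
  fix z assume "z \<in> {mukai G ht y | y. y \<in> NY}"
  then show "z \<in> {of_int (g * k) | k. True}"
    using mukai_ht_in_gamma_multiples by blast
next
  fix z :: real assume "z \<in> {of_int (g * k) | k. True}"
  then obtain k where k: "z = of_int (g * k)"
    by blast
  obtain y where y: "y \<in> NY" "mukai G ht y = of_int g"
    using mukai_ht_attains_gamma by blast
  have "mukai G ht (of_int k *\<^sub>R y) = z"
    using y k by (simp add: bilinear_rmul[OF bilinear_mukai])
  moreover have "of_int k *\<^sub>R y \<in> NY"
    using integral_lattice.add_subgroup[OF integral_lattice_NY] y(1) by (rule add_subgroup_scaleR_of_int)
  ultimately show "z \<in> {mukai G ht y | y. y \<in> NY}"
    by blast
qed

lemma lat_gamma_ht: "lat_gamma (mukai G) NY ht = g"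
  using gamma_pos gamma_image_ht by (rule lat_gamma_eqI)

lemma ht_square: "mukai G ht ht = 2 * real a * real b / real d ^ 2"
  using h_square mukai_commute[OF G_sym, of h ht]
  by (simp add: mukai_ht power2_eq_square)

sublocale Y: positive_primitive_vector "mukai G" NY ht
  using integral_lattice_NY ht_primitive ht_square a_pos b_pos d_pos
  by (simp add: positive_primitive_vector_def positive_primitive_vector_axioms_def)

lemma Kh_eq: "Kh = orth (mukai G) NY ht"
  unfolding Kh_def orth_def mukai_ht using d_pos by auto

lemma part_two:
  "h \<in> NY \<and> mukai G h h = 2 * real a * real b
   \<and> ht \<in> NY \<and> lat_primitive NY ht
   \<and> lat_gamma (mukai G) NY ht = g
   \<and> pstar (mukai G) ht = (real d ^ 2 / (2 * real a * real b)) *\<^sub>R ht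
   \<and> ustar (mukai G) NY ht \<noteq> {}
   \<and> (\<forall>u \<in> ustar (mukai G) NY ht.
        NY = zspan ({ht} \<union> Kh \<union> {of_int g *\<^sub>R pstar (mukai G) ht + u})
      \<and> real (coset_order Kh u) = 2 * real a * real b / (real d ^ 2 * of_int g))"
proof (intro conjI ballI h_in_NY h_square ht_in_NY ht_primitive lat_gamma_ht Y.ustar_nonempty)
  show "pstar (mukai G) ht = (real d ^ 2 / (2 * real a * real b)) *\<^sub>R ht"
    unfolding pstar_def ht_square by simp
  fix u assume u: "u \<in> ustar (mukai G) NY ht"
  show "NY = zspan ({ht} \<union> Kh \<union> {of_int g *\<^sub>R pstar (mukai G) ht + u})"
    using Y.zspan_decomposition[OF u] unfolding Kh_eq lat_gamma_ht .
  show "real (coset_order Kh u) = 2 * real a * real b / (real d ^ 2 * of_int g)"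
    unfolding Kh_eq Y.coset_order_ustar[OF u] ht_square lat_gamma_ht by simp
qed

lemma mukai_v_iota: "mukai G v (\<iota> x) = real d * bf G Ht x"
  unfolding v_def \<iota>_def mukai_def H_eq by (simp add: bilinear_lmul[OF bilinear_bf])

lemma mukai_h_iota: "mukai G h (\<iota> x) = 0"
  unfolding h_def \<iota>_def mukai_def by (simp add: bilinear_lzero[OF bilinear_bf])

lemma iota_KHt_subset: "\<iota> ` KHt \<subseteq> Kh"
proof
  fix z assume "z \<in> \<iota> ` KHt"
  then obtain k where k: "z = \<iota> k" "k \<in> NXlat" "bf G Ht k = 0"
    unfolding KHt_def orth_def by blast
  have "\<iota> k + 0 *\<^sub>R v \<in> NY"
    unfolding NY_def
    using k by (intro NYlat_intro) (simp_all add: \<iota>_def mukai_lat_def mukai_v_iota[unfolded \<iota>_def])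
  then show "z \<in> Kh"
    unfolding Kh_def orth_def using k mukai_h_iota by simp
qed

lemma scaleR_v_in_Kh: "t *\<^sub>R v \<in> Kh"
proof -
  have "0 + t *\<^sub>R v \<in> NY"
    unfolding NY_def
    by (intro NYlat_intro add_subgroup_zero[OF add_subgroup_mukai_lat]) (simp add: bilinear_rzero[OF bilinear_mukai])
  then show ?thesis
    unfolding Kh_def orth_def by (simp add: bilinear_rmul[OF bilinear_mukai] mukai_h_v)
qed

text \<open>The denominator c of the lift of u is absorbed by the line through v, using a Bezout
  relation between c and d.\<close>
lemma scaled_iota_ustar_in_Kh:
  assumes u: "u \<in> ustar (bf G) NXlat Ht"
  shows "(2 * real a * real b / (real d ^ 2 * of_int g) * real c) *\<^sub>R \<iota> u \<in> Kh"
proof -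
  obtain N where N: "2 * int a * int b = int d ^ 2 * g * N"
    "2 * real a * real b / (real d ^ 2 * of_int g) = of_int N"
    using index_integral by blast
  obtain \<alpha> \<beta> where \<alpha>\<beta>: "\<alpha> * int c + \<beta> * int d = 1"
    using bezout_int[of "int c" "int d"] coprime_c_d by auto
  define x1 where "x1 = of_int g *\<^sub>R pstar (bf G) Ht + u"
  have x1: "x1 \<in> NXlat"
    using X.ustar_shift_in[OF u] by (simp add: x1_def g_def)
  define w :: "real \<times> (real^'n) \<times> real"
    where "w = (of_int \<beta> * real a, of_int (N * int c) *\<^sub>R x1 - of_int \<alpha> *\<^sub>R Ht, of_int \<beta> * real b)"
  have "of_int N * real c * of_int g * real d ^ 2 / (2 * real a * real b * real c ^ 2) = 1 / real c"
    unfolding N(2)[symmetric] using a_pos b_pos c_pos d_pos gamma_pos by (simp add: field_simps power2_eq_square)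
  then have "(of_int N * real c) *\<^sub>R u = of_int (N * int c) *\<^sub>R x1 - (1 / real c) *\<^sub>R Ht"
    using scaleR_ustar_eq[of "of_int N * real c" u] unfolding x1_def[symmetric] by simp
  also have "(1 / real c) *\<^sub>R Ht = of_int \<alpha> *\<^sub>R Ht + (of_int \<beta> / real c) *\<^sub>R H"
    using arg_cong[OF \<alpha>\<beta>, of real_of_int] c_pos unfolding H_eq
    by (simp add: field_simps scaleR_add_left[symmetric])
  finally have "(of_int N * real c) *\<^sub>R \<iota> u = w + (- (of_int \<beta> / real c)) *\<^sub>R v"
    unfolding \<iota>_def w_def v_def r_eq s_eq using c_pos by (simp add: algebra_simps)
  also have "\<dots> \<in> NY"
    unfolding NY_def
  proof (rule NYlat_intro)
    have "of_int (N * int c) *\<^sub>R x1 - of_int \<alpha> *\<^sub>R Ht \<in> NXlat"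
      using x1 Ht_in
      by (intro add_subgroup_diff[OF add_subgroup_NXlat] add_subgroup_scaleR_of_int[OF add_subgroup_NXlat])
    then show "w \<in> mukai_lat"
      unfolding w_def mukai_lat_def by simp
    have "mukai G v ((of_int N * real c) *\<^sub>R \<iota> u) = 0"
      using X.ustar_perp[OF u] by (simp add: bilinear_rmul[OF bilinear_mukai] mukai_v_iota)
    then show "mukai G v w = 0"
      using \<open>(of_int N * real c) *\<^sub>R \<iota> u = w + _\<close> v_isotropic
      by (simp add: bilinear_rsub[OF bilinear_mukai] bilinear_rmul[OF bilinear_mukai])
  qed
  finally show ?thesis
    unfolding N(2) Kh_def orth_def by (simp add: bilinear_rmul[OF bilinear_mukai] mukai_h_iota)
qed

lemma Kh_cases:
  assumes "k \<in> Kh"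
  obtains l x t where "k = (real a * of_int l, x, real b * of_int l) + t *\<^sub>R v" "x \<in> NXlat"
    "real d * bf G Ht x = 2 * real a * real b * real c * of_int l"
proof -
  have k: "k \<in> NY" "mukai G h k = 0"
    using assms unfolding Kh_def orth_def by auto
  obtain W0 x W2 t where y: "k = (of_int W0, x, of_int W2) + t *\<^sub>R v" "x \<in> NXlat"
      "mukai G v (of_int W0, x, of_int W2) = 0"
    using k(1) unfolding NY_def by (rule NYlat_cases)
  have "mukai G h (of_int W0, x, of_int W2) = 0"
    using k(2) unfolding y(1) by (simp add: bilinear_radd[OF bilinear_mukai] bilinear_rmul[OF bilinear_mukai] mukai_h_v)
  then have "real_of_int (int a * W2) = real_of_int (int b * W0)"
    unfolding h_def mukai_def by (simp add: bilinear_lzero[OF bilinear_bf])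
  then have ab: "int a * W2 = int b * W0"
    by (simp only: of_int_eq_iff)
  then have "int b dvd W2"
    using coprime_a_b by (metis coprime_commute coprime_dvd_mult_right_iff dvd_triv_left)
  then obtain l where l: "W2 = int b * l"
    by (elim dvdE)
  then have "W0 = int a * l"
    using ab b_pos by (simp add: ac_simps)
  with l have "k = (real a * of_int l, x, real b * of_int l) + t *\<^sub>R v"
      and "real d * bf G Ht x = 2 * real a * real b * real c * of_int l"
    using y unfolding mukai_def v_def H_eq r_eq s_eq by (simp_all add: bilinear_lmul[OF bilinear_bf] algebra_simps)
  then show thesis
    using that y(2) by blast
qed

lemma Kh_subset_zspan:
  assumes u: "u \<in> ustar (bf G) NXlat Ht"
  shows "Kh \<subseteq> zspan (\<iota> ` KHt \<union> range (\<lambda>t::real. t *\<^sub>R v)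
                 \<union> {(2 * real a * real b / (real d ^ 2 * of_int g) * real c) *\<^sub>R \<iota> u})"
    (is "Kh \<subseteq> zspan ?A")
proof
  fix k assume "k \<in> Kh"
  then obtain l x t where k: "k = (real a * of_int l, x, real b * of_int l) + t *\<^sub>R v" "x \<in> NXlat"
      "real d * bf G Ht x = 2 * real a * real b * real c * of_int l"
    by (rule Kh_cases)
  obtain N where N: "2 * int a * int b = int d ^ 2 * g * N"
      "2 * real a * real b / (real d ^ 2 * of_int g) = of_int N"
    using index_integral by blast
  have Nr: "real_of_int N * real_of_int g * (real d)\<^sup>2 = 2 * real a * real b"
    using arg_cong[OF N(1), of real_of_int] by simp
  define x1 where "x1 = of_int g *\<^sub>R pstar (bf G) Ht + u"
  define M where "M = N * int c * int d * l"
  define y where "y = x - of_int M *\<^sub>R x1"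
  have "bf G Ht x1 = of_int g"
    using X.pairing_ustar_shift[OF u] unfolding x1_def g_def .
  then have "real d * bf G Ht y = 0"
    unfolding y_def M_def using k(3) Nr
    by (simp add: bilinear_rsub[OF bilinear_bf] bilinear_rmul[OF bilinear_bf] algebra_simps power2_eq_square)
  moreover have "y \<in> NXlat"
    unfolding y_def x1_def using k(2) X.ustar_shift_in[OF u] unfolding g_def[symmetric]
    by (intro add_subgroup_diff[OF add_subgroup_NXlat] add_subgroup_scaleR_of_int[OF add_subgroup_NXlat])
  ultimately have y: "y \<in> KHt"
    unfolding KHt_def orth_def using d_pos by simp
  have "of_int (int d * l) * (of_int N * real c) * of_int g * real d ^ 2 / (2 * real a * real b * real c ^ 2)
      = real d * of_int l / real c"
    unfolding N(2)[symmetric] using a_pos b_pos c_pos d_pos gamma_pos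
    by (simp add: field_simps power2_eq_square)
  then have "(of_int (int d * l) * (of_int N * real c)) *\<^sub>R u = of_int M *\<^sub>R x1 - (real d * of_int l / real c) *\<^sub>R Ht"
    using scaleR_ustar_eq[of "of_int (int d * l) * (of_int N * real c)" u]
    unfolding x1_def[symmetric] M_def by (simp add: ac_simps)
  then have "k = \<iota> y + of_int (int d * l) *\<^sub>R ((of_int N * real c) *\<^sub>R \<iota> u) + (t + of_int l / real c) *\<^sub>R v"
    unfolding k(1) \<iota>_def v_def y_def H_eq r_eq s_eq using c_pos
    by (simp add: algebra_simps)
  also have "\<dots> \<in> zspan ?A"
    using y unfolding N(2)[symmetric]
    by (intro add_subgroup_add[OF add_subgroup_zspan] add_subgroup_scaleR_of_int[OF add_subgroup_zspan]
        zspan_superset[THEN subsetD]) auto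
  finally show "k \<in> zspan ?A" .
qed

lemma Kh_eq_zspan:
  assumes u: "u \<in> ustar (bf G) NXlat Ht"
  shows "Kh = zspan (\<iota> ` KHt \<union> range (\<lambda>t::real. t *\<^sub>R v)
                 \<union> {(2 * real a * real b / (real d ^ 2 * of_int g) * real c) *\<^sub>R \<iota> u})"
proof
  show "zspan (\<iota> ` KHt \<union> range (\<lambda>t::real. t *\<^sub>R v)
      \<union> {(2 * real a * real b / (real d ^ 2 * of_int g) * real c) *\<^sub>R \<iota> u}) \<subseteq> Kh"
    using iota_KHt_subset scaleR_v_in_Kh scaled_iota_ustar_in_Kh[OF u] unfolding Kh_eq
    by (intro zspan_least Y.add_subgroup_orth) auto
qed (rule Kh_subset_zspan[OF u])

lemma qspan_Kh: "qspan Kh = qspan (\<iota> ` KHt \<union> range (\<lambda>t::real. t *\<^sub>R v))"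
    (is "_ = qspan ?B")
proof
  obtain u where u: "u \<in> ustar (bf G) NXlat Ht"
    using X.ustar_nonempty by blast
  have "\<iota> ((bf G Ht Ht / of_int g) *\<^sub>R u) \<in> ?B"
    using X.ustar_multiple_in_K[OF u] unfolding KHt_def g_def by blast
  then have "(of_int g / bf G Ht Ht) *\<^sub>R \<iota> ((bf G Ht Ht / of_int g) *\<^sub>R u) \<in> qspan ?B"
    unfolding Ht_square by (intro qspan_scaleR qspan_superset[THEN subsetD]) simp_all
  then have "\<iota> u \<in> qspan ?B"
    using X.square_pos gamma_pos unfolding \<iota>_def by simp
  then have "(2 * real a * real b / (real d ^ 2 * of_int g) * real c) *\<^sub>R \<iota> u \<in> qspan ?B"
    by (intro qspan_scaleR) simp_all
  then have "?B \<union> {(2 * real a * real b / (real d ^ 2 * of_int g) * real c) *\<^sub>R \<iota> u} \<subseteq> qspan ?B"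
    using qspan_superset[of ?B] by blast
  then have "Kh \<subseteq> qspan ?B"
    unfolding Kh_eq_zspan[OF u] by (rule subset_trans[OF zspan_subset_qspan qspan_subset_qspan])
  then show "qspan Kh \<subseteq> qspan ?B"
    by (rule qspan_subset_qspan)
  have "?B \<subseteq> qspan Kh"
    using iota_KHt_subset scaleR_v_in_Kh qspan_superset by blast
  then show "qspan ?B \<subseteq> qspan Kh"
    by (rule qspan_subset_qspan)
qed

lemma gamma_pstar_ht:
  "of_int g *\<^sub>R pstar (mukai G) ht = (- (of_int g * real d / (2 * real b)), 0, of_int g * real d / (2 * real a))"
  unfolding pstar_def ht_square unfolding ht_def h_def using a_pos b_pos d_pos
  by (simp add: field_simps power2_eq_square)

lemma gamma_pstar_ht_plus_iota_in_NY:
  assumes u: "u \<in> ustar (bf G) NXlat Ht"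
    and \<alpha>\<beta>: "m + 1 = 2 * int a * \<alpha>" "m - 1 = 2 * int b * \<beta>"
  shows "of_int g *\<^sub>R pstar (mukai G) ht + (of_int m * real c) *\<^sub>R \<iota> u \<in> NY"
proof -
  have "of_int m + 1 = 2 * real a * of_int \<alpha>" "of_int m - 1 = 2 * real b * of_int \<beta>"
    using arg_cong[OF \<alpha>\<beta>(1), of real_of_int] arg_cong[OF \<alpha>\<beta>(2), of real_of_int] by simp_all
  then have \<alpha>: "of_int m = 2 * real a * of_int \<alpha> - 1" and \<beta>: "of_int m = 2 * real b * of_int \<beta> + 1"
    by linarith+
  define x1 where "x1 = of_int g *\<^sub>R pstar (bf G) Ht + u"
  define t where "t = of_int m * of_int g * real d / (2 * real a * real b * real c)"
  define w :: "real \<times> (real^'n) \<times> real"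
    where "w = (of_int (int d * g * \<beta>), of_int (m * int c) *\<^sub>R x1, of_int (int d * g * \<alpha>))"
  have "of_int m * real c * of_int g * real d ^ 2 / (2 * real a * real b * real c ^ 2) = t * real d"
    unfolding t_def using a_pos b_pos c_pos by (simp add: field_simps power2_eq_square)
  then have "(of_int m * real c) *\<^sub>R \<iota> u = (0, of_int (m * int c) *\<^sub>R x1 - t *\<^sub>R H, 0)"
    using scaleR_ustar_eq[of "of_int m * real c" u] unfolding x1_def[symmetric] \<iota>_def H_eq by simp
  moreover have "- (of_int g * real d / (2 * real b)) = of_int (int d * g * \<beta>) - t * real r"
    unfolding t_def r_eq using a_pos b_pos c_pos by (simp add: \<beta> field_simps)
  moreover have "of_int g * real d / (2 * real a) = of_int (int d * g * \<alpha>) - t * real s"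
    unfolding t_def s_eq using a_pos b_pos c_pos by (simp add: \<alpha> field_simps)
  ultimately have \<xi>: "of_int g *\<^sub>R pstar (mukai G) ht + (of_int m * real c) *\<^sub>R \<iota> u = w + (- t) *\<^sub>R v"
    unfolding gamma_pstar_ht w_def v_def by simp
  have "mukai G v (of_int g *\<^sub>R pstar (mukai G) ht + (of_int m * real c) *\<^sub>R \<iota> u) = 0"
    using X.ustar_perp[OF u] unfolding pstar_def
    by (simp add: bilinear_radd[OF bilinear_mukai] bilinear_rmul[OF bilinear_mukai] mukai_v_ht mukai_v_iota)
  then have "mukai G v w = 0"
    unfolding \<xi> by (simp add: bilinear_rsub[OF bilinear_mukai] bilinear_rmul[OF bilinear_mukai] v_isotropic)
  moreover have "x1 \<in> NXlat"
    using X.ustar_shift_in[OF u] unfolding x1_def g_def .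
  then have "of_int (m * int c) *\<^sub>R x1 \<in> NXlat"
    by (rule add_subgroup_scaleR_of_int[OF add_subgroup_NXlat])
  then have "w \<in> mukai_lat"
    unfolding w_def mukai_lat_def by simp
  ultimately show ?thesis
    unfolding \<xi> NY_def by (rule NYlat_intro[rotated])
qed

lemma ustar_ht_congruence:
  assumes u: "u \<in> ustar (bf G) NXlat Ht" and w: "w \<in> ustar (mukai G) NY ht"
    and m: "[m = -1] (mod 2 * int a)" "[m = 1] (mod 2 * int b)"
  shows "w - (of_int m * real c) *\<^sub>R \<iota> u \<in> Kh"
proof -
  have "2 * int a dvd m + 1" "2 * int b dvd m - 1"
    using m by (simp_all add: cong_iff_dvd_diff)
  then obtain \<alpha> \<beta> where \<alpha>\<beta>: "m + 1 = 2 * int a * \<alpha>" "m - 1 = 2 * int b * \<beta>"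
    by (elim dvdE)
  have "w - (of_int m * real c) *\<^sub>R \<iota> u
      = (of_int g *\<^sub>R pstar (mukai G) ht + w) - (of_int g *\<^sub>R pstar (mukai G) ht + (of_int m * real c) *\<^sub>R \<iota> u)"
    by simp
  also have "\<dots> \<in> NY"
    using Y.ustar_shift_in[OF w] gamma_pstar_ht_plus_iota_in_NY[OF u \<alpha>\<beta>] unfolding lat_gamma_ht
    by (rule add_subgroup_diff[OF Y.add_subgroup])
  finally have "w - (of_int m * real c) *\<^sub>R \<iota> u \<in> NY" .
  moreover have "mukai G ht (w - (of_int m * real c) *\<^sub>R \<iota> u) = 0"
    using Y.ustar_perp[OF w] mukai_h_iota
    by (simp add: bilinear_rsub[OF bilinear_mukai] bilinear_rmul[OF bilinear_mukai] mukai_ht)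
  ultimately show ?thesis
    unfolding Kh_eq orth_def by simp
qed

lemma part_three:
  "\<iota> ` KHt \<subseteq> Kh
   \<and> (\<forall>k\<in>KHt. \<forall>k'\<in>KHt. mukai G (\<iota> k) (\<iota> k') = bf G k k')
   \<and> (\<forall>k\<in>KHt. \<forall>t::real. \<iota> k = t *\<^sub>R v \<longrightarrow> k = 0)
   \<and> qspan Kh = qspan (\<iota> ` KHt \<union> range (\<lambda>t::real. t *\<^sub>R v))
   \<and> (\<forall>u \<in> ustar (bf G) NXlat Ht.
        Kh = zspan (\<iota> ` KHt \<union> range (\<lambda>t::real. t *\<^sub>R v)
               \<union> {(2 * real a * real b / (real d ^ 2 * of_int g) * real c) *\<^sub>R \<iota> u}))
   \<and> (\<forall>u \<in> ustar (bf G) NXlat Ht. \<forall>w \<in> ustar (mukai G) NY ht. \<forall>m::int.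
        [m = -1] (mod 2 * int a) \<and> [m = 1] (mod 2 * int b)
        \<longrightarrow> w - (of_int m * real c) *\<^sub>R \<iota> u \<in> Kh)"
proof -
  have "\<forall>k\<in>KHt. \<forall>k'\<in>KHt. mukai G (\<iota> k) (\<iota> k') = bf G k k'"
    unfolding \<iota>_def mukai_def by simp
  moreover have "\<forall>k\<in>KHt. \<forall>t::real. \<iota> k = t *\<^sub>R v \<longrightarrow> k = 0"
    using r_pos unfolding \<iota>_def v_def by auto
  ultimately show ?thesis
    using iota_KHt_subset qspan_Kh Kh_eq_zspan ustar_ht_congruence by blast
qed

end

theorem proposition2p3p1:
  fixes G :: "real^'n^'n" and H :: "real^'n" and r s d :: nat
    and c a b :: nat and g :: int and Ht :: "real^'n"
    and v h ht :: "real \<times> (real^'n) \<times> real"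
    and NY KH Kh :: "(real \<times> (real^'n) \<times> real) set" and KHt :: "(real^'n) set"
    and \<iota> :: "real^'n \<Rightarrow> real \<times> (real^'n) \<times> real"
  assumes G_int: "\<forall>i j. G $ i $ j \<in> \<int>"
    and G_sym: "\<forall>i j. G $ i $ j = G $ j $ i"
    and G_even: "\<forall>x\<in>NXlat. bf G x x \<in> {2 * of_int k | k. True}"
    and G_nondeg: "det G \<noteq> 0"
    and rank_le: "CARD('n) \<le> 20"
    and r_pos: "r > 0" and s_pos: "s > 0" and d_pos: "d > 0"
    and H_in: "H \<in> NXlat"
    and H_sq: "bf G H H = 2 * real r * real s"
    and hodge_index: "\<forall>x\<in>NXlat. x \<noteq> 0 \<and> bf G H x = 0 \<longrightarrow> bf G x x < 0"
  defines "Ht \<equiv> (1 / real d) *\<^sub>R H"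
  assumes Ht_prim: "lat_primitive NXlat Ht"
  defines "v \<equiv> (real r, H, real s)"
  assumes v_prim: "lat_primitive mukai_lat v"
  defines "c \<equiv> gcd r s" and "a \<equiv> r div gcd r s" and "b \<equiv> s div gcd r s"
    and "g \<equiv> lat_gamma (bf G) NXlat Ht"
  assumes coprime: "coprime (int c) (int d * g)"
  defines "KHt \<equiv> orth (bf G) NXlat Ht"
    and "NY \<equiv> NYlat G v"
    and "h \<equiv> (- real a, 0, real b)"
    and "ht \<equiv> (1 / real d) *\<^sub>R h"
    and "Kh \<equiv> orth (mukai G) NY h"
    and "\<iota> \<equiv> (\<lambda>k. (0, k, 0))"
  shows
    "\<comment> \<open>(1)\<close>
     (pstar (bf G) Ht = (real d ^ 2 / (2 * real a * real b * real c ^ 2)) *\<^sub>R Ht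
     \<and> ustar (bf G) NXlat Ht \<noteq> {}
     \<and> (\<forall>u \<in> ustar (bf G) NXlat Ht.
          NXlat = zspan ({Ht} \<union> KHt \<union> {of_int g *\<^sub>R pstar (bf G) Ht + u})
        \<and> real (coset_order KHt u) = 2 * real a * real b * real c ^ 2 / (real d ^ 2 * of_int g)))
     \<and>
     \<comment> \<open>(2)\<close>
     (h \<in> NY \<and> mukai G h h = 2 * real a * real b
     \<and> ht \<in> NY \<and> lat_primitive NY ht
     \<and> lat_gamma (mukai G) NY ht = g
     \<and> pstar (mukai G) ht = (real d ^ 2 / (2 * real a * real b)) *\<^sub>R ht
     \<and> ustar (mukai G) NY ht \<noteq> {}
     \<and> (\<forall>u \<in> ustar (mukai G) NY ht.
          NY = zspan ({ht} \<union> Kh \<union> {of_int g *\<^sub>R pstar (mukai G) ht + u})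
        \<and> real (coset_order Kh u) = 2 * real a * real b / (real d ^ 2 * of_int g)))
     \<and>
     \<comment> \<open>(3)\<close>
     (\<iota> ` KHt \<subseteq> Kh
     \<and> (\<forall>k\<in>KHt. \<forall>k'\<in>KHt. mukai G (\<iota> k) (\<iota> k') = bf G k k')
     \<and> (\<forall>k\<in>KHt. \<forall>t::real. \<iota> k = t *\<^sub>R v \<longrightarrow> k = 0)
     \<and> qspan Kh = qspan (\<iota> ` KHt \<union> range (\<lambda>t::real. t *\<^sub>R v))
     \<and> (\<forall>u \<in> ustar (bf G) NXlat Ht.
          Kh = zspan (\<iota> ` KHt \<union> range (\<lambda>t::real. t *\<^sub>R v)
                 \<union> {(2 * real a * real b / (real d ^ 2 * of_int g) * real c) *\<^sub>R \<iota> u}))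
     \<and> (\<forall>u \<in> ustar (bf G) NXlat Ht. \<forall>w \<in> ustar (mukai G) NY ht. \<forall>m::int.
          [m = -1] (mod 2 * int a) \<and> [m = 1] (mod 2 * int b)
          \<longrightarrow> w - (of_int m * real c) *\<^sub>R \<iota> u \<in> Kh))"
proof -
  \<comment> \<open>non-degeneracy, the rank bound, the Hodge index property and primitivity of v are not needed\<close>
  interpret isotropic_mukai_vector G H r s d c a b g Ht v h ht NY Kh KHt \<iota>
    using G_int G_sym G_even r_pos s_pos d_pos H_sq Ht_prim coprime
    by unfold_locales (simp_all add: Ht_def v_def c_def a_def b_def g_def KHt_def NY_def h_def ht_def
        Kh_def \<iota>_def)
  show ?thesis
    using part_one part_two part_three by blast
qed

end
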